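(* Let $G$ be a commutative group, $H$ its torsion subgroup, and $U\subset G$ a nonempty finite set. If $U$ is contained in a single coset of $H$, then \[ \alpha(U)=\alpha'(U)=\alpha''(U)=\beta(U)=\beta'(U)=\beta''(U)=1; \] otherwise $\beta(U)\ge2$ and $\alpha(U)\ge3/2$.
   Context: With $A,B$ ranging over nonempty finite subsets of $G$: $\alpha(U)=\inf_{A\supset U,B\supset U}\frac{|A+B|}{\sqrt{|A||B|}}$; $\alpha'(U)=\inf_{A\supset U,B\supset U,|A|=|B|}\frac{|A+B|}{|A|}$; $\alpha''(U)=\inf_{A\supset U}\frac{|A+A|}{|A|}$; $\beta(U)=\inf_{A,B}\frac{|A+B+U|}{\sqrt{|A||B|}}$; $\beta'(U)=\inf_{A,B,|A|=|B|}\frac{|A+B+U|}{\sqrt{|A||B|}}$; $\beta''(U)=\inf_A\frac{|A+A+U|}{|A|}$. *)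

theory Defs
  imports Main Complex_Main
begin

definition sumset :: "'a::ab_group_add set \<Rightarrow> 'a set \<Rightarrow> 'a set" where
  "sumset A B = {a + b | a b. a \<in> A \<and> b \<in> B}"

definition nmul :: "nat \<Rightarrow> 'a::ab_group_add \<Rightarrow> 'a" where
  "nmul n x = (\<Sum>i<n. x)"

definition torsion :: "'a::ab_group_add set" where
  "torsion = {x. \<exists>n>0. nmul n x = 0}"

definition in_single_torsion_coset :: "'a::ab_group_add set \<Rightarrow> bool" where
  "in_single_torsion_coset U \<longleftrightarrow> (\<exists>g. \<forall>u\<in>U. u - g \<in> torsion)"

definition alpha :: "'a::ab_group_add set \<Rightarrow> real" where
  "alpha U = Inf {real (card (sumset A B)) / sqrt (real (card A) * real (card B)) | A B.
      finite A \<and> A \<noteq> {} \<and> finite B \<and> B \<noteq> {} \<and> U \<subseteq> A \<and> U \<subseteq> B}"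

definition alpha' :: "'a::ab_group_add set \<Rightarrow> real" where
  "alpha' U = Inf {real (card (sumset A B)) / real (card A) | A B.
      finite A \<and> A \<noteq> {} \<and> finite B \<and> B \<noteq> {} \<and> U \<subseteq> A \<and> U \<subseteq> B \<and> card A = card B}"

definition alpha'' :: "'a::ab_group_add set \<Rightarrow> real" where
  "alpha'' U = Inf {real (card (sumset A A)) / real (card A) | A.
      finite A \<and> A \<noteq> {} \<and> U \<subseteq> A}"

definition beta :: "'a::ab_group_add set \<Rightarrow> real" where
  "beta U = Inf {real (card (sumset (sumset A B) U)) / sqrt (real (card A) * real (card B)) | A B.
      finite A \<and> A \<noteq> {} \<and> finite B \<and> B \<noteq> {}}"

definition beta' :: "'a::ab_group_add set \<Rightarrow> real" where
  "beta' U = Inf {real (card (sumset (sumset A B) U)) / sqrt (real (card A) * real (card B)) | A B.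
      finite A \<and> A \<noteq> {} \<and> finite B \<and> B \<noteq> {} \<and> card A = card B}"

definition beta'' :: "'a::ab_group_add set \<Rightarrow> real" where
  "beta'' U = Inf {real (card (sumset (sumset A A) U)) / real (card A) | A.
      finite A \<and> A \<noteq> {}}"

end

theory Submission
  imports Defs
begin

(*
  If U lies in a coset g + H, the finitely many torsion elements u - g generate a finite
  subgroup K, and A = g + K satisfies A + A = 2g + K and A + A + U = 3g + K, so all six
  ratios are attained with value 1, which is also a trivial lower bound.

  Otherwise U contains u and u + d with d of infinite order. Split sets into "lines", the
  cosets of the cyclic group generated by d; each line is a copy of Z, where
  |X + Y| >= |X| + |Y| - 1. Summing this over the k_A lines of A against a most popular line
  of B, which carries t >= |B| / k_B elements, gives |A + B| >= |A| + k_A (t - 1).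
  Adding {u, u + d} adds at least one element on every line, so |A + B + U| >= |A| + k_A t,
  and AM-GM applied to this and the symmetric bound yields |A + B + U| >= 2 sqrt(|A| |B|).
  If u, u + d lie in A and B, the line through u gives t >= 2, and averaging the two bounds
  for |A + B| yields |A + B| >= 3/2 sqrt(|A| |B|).
*)

lemma nmul_0 [simp]: "nmul 0 x = 0"
  by (simp add: nmul_def)

lemma nmul_Suc: "nmul (Suc n) x = x + nmul n x"
  by (simp add: nmul_def add.commute)

lemma nmul_add: "nmul (m + n) x = nmul m x + nmul n x"
  by (induction m) (simp_all add: nmul_Suc add.assoc)

lemma nmul_uminus: "nmul n (- x) = - nmul n x"
  by (induction n) (simp_all add: nmul_Suc add.commute)

lemma nmul_mult_eq_0: "nmul n x = 0 \<Longrightarrow> nmul (q * n) x = 0"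
  by (induction q) (simp_all add: nmul_add)

lemma nmul_mod: "nmul n x = 0 \<Longrightarrow> nmul (i mod n) x = nmul i x"
  by (metis div_mult_mod_eq nmul_add nmul_mult_eq_0 add_0)

lemma nmul_eq_0_iff_notin_torsion:
  "d \<notin> torsion \<Longrightarrow> nmul n d = 0 \<longleftrightarrow> n = 0"
  by (auto simp: torsion_def)

lemma nmul_inj_notin_torsion:
  assumes "d \<notin> torsion" "nmul m d = nmul n d"
  shows "m = n"
proof (rule linorder_cases [of m n])
  assume "m < n"
  then have "nmul n d = nmul m d + nmul (n - m) d"
    by (simp flip: nmul_add)
  with assms \<open>m < n\<close> show ?thesis
    by (simp add: nmul_eq_0_iff_notin_torsion)
next
  assume "n < m"
  then have "nmul m d = nmul n d + nmul (m - n) d"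
    by (simp flip: nmul_add)
  with assms \<open>n < m\<close> show ?thesis
    by (simp add: nmul_eq_0_iff_notin_torsion)
qed

lemma uminus_notin_torsion: "d \<notin> torsion \<Longrightarrow> - d \<notin> torsion"
  by (simp add: torsion_def nmul_uminus)

lemma sumset_iff: "z \<in> sumset A B \<longleftrightarrow> (\<exists>a\<in>A. \<exists>b\<in>B. z = a + b)"
  by (auto simp: sumset_def)

lemma add_mem_sumset: "a \<in> A \<Longrightarrow> b \<in> B \<Longrightarrow> a + b \<in> sumset A B"
  by (auto simp: sumset_def)

lemma sumset_eq_image: "sumset A B = (\<lambda>(a, b). a + b) ` (A \<times> B)"
  by (auto simp: sumset_def)

lemma finite_sumset [simp]: "finite A \<Longrightarrow> finite B \<Longrightarrow> finite (sumset A B)"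
  by (simp add: sumset_eq_image)

lemma sumset_mono: "A \<subseteq> A' \<Longrightarrow> B \<subseteq> B' \<Longrightarrow> sumset A B \<subseteq> sumset A' B'"
  by (auto simp: sumset_def)

lemma sumset_commute: "sumset A B = sumset B A"
  unfolding sumset_def by (blast intro: add.commute)

lemma card_le_card_sumset:
  assumes "finite A" "finite B" "b \<in> B"
  shows "card A \<le> card (sumset A B)"
proof -
  have "card A = card ((\<lambda>a. a + b) ` A)"
    by (simp add: card_image)
  also have "\<dots> \<le> card (sumset A B)"
    using assms by (intro card_mono) (auto intro: add_mem_sumset)
  finally show ?thesis .
qed

lemma sqrt_card_le_card_sumset:
  assumes "finite A" "finite B" "A \<noteq> {}" "B \<noteq> {}"
  shows "sqrt (real (card A) * real (card B)) \<le> real (card (sumset A B))"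
proof -
  obtain a b where "a \<in> A" "b \<in> B"
    using assms(3,4) by blast
  then have "card A \<le> card (sumset A B)" "card B \<le> card (sumset A B)"
    using assms(1,2) card_le_card_sumset [of B A a] by (simp_all add: card_le_card_sumset sumset_commute)
  then have "real (card A) * real (card B) \<le> real (card (sumset A B)) * real (card (sumset A B))"
    by (intro mult_mono) simp_all
  then show ?thesis
    using real_sqrt_le_mono by fastforce
qed

(* The coset x + Zd of the cyclic subgroup generated by d; as nmul has no negative
   multiples, both sides of the defining equation carry one. *)
definition line :: "'a::ab_group_add \<Rightarrow> 'a \<Rightarrow> 'a set" where
  "line d x = {y. \<exists>m n. x + nmul m d = y + nmul n d}"

lemma line_refl [simp]: "x \<in> line d x"
  unfolding line_def by (intro CollectI exI [of _ 0]) simp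

lemma add_nmul_mem_line: "x + nmul n d \<in> line d x"
  unfolding line_def by (intro CollectI exI [of _ n] exI [of _ 0]) simp

lemma line_sym: "y \<in> line d x \<Longrightarrow> x \<in> line d y"
  unfolding line_def mem_Collect_eq by (metis)

lemma line_trans:
  assumes "y \<in> line d x" "z \<in> line d y"
  shows "z \<in> line d x"
proof -
  obtain m n where mn: "x + nmul m d = y + nmul n d"
    using assms(1) by (auto simp: line_def)
  obtain m' n' where mn': "y + nmul m' d = z + nmul n' d"
    using assms(2) by (auto simp: line_def)
  have "x + nmul (m + m') d = (y + nmul m' d) + nmul n d"
    by (simp add: nmul_add mn flip: add.assoc)
  also have "\<dots> = z + nmul (n' + n) d"
    by (simp add: nmul_add mn' add.assoc)
  finally show ?thesis
    unfolding line_def by blast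
qed

lemma line_eq: "y \<in> line d x \<Longrightarrow> line d y = line d x"
  by (rule set_eqI) (meson line_sym line_trans)

lemma line_eq_iff: "line d x = line d y \<longleftrightarrow> y \<in> line d x"
  using line_eq line_refl by metis

lemma lines_disjoint: "line d x \<noteq> line d y \<Longrightarrow> line d x \<inter> line d y = {}"
  using line_eq by blast

lemma mem_line_cases:
  assumes "y \<in> line d x"
  obtains n where "y = x + nmul n d" | n where "x = y + nmul n d"
proof -
  obtain m n where mn: "x + nmul m d = y + nmul n d"
    using assms by (auto simp: line_def)
  show thesis
  proof (cases "n \<le> m")
    case True
    then have "x + nmul (m - n) d + nmul n d = y + nmul n d"
      by (simp add: mn add.assoc flip: nmul_add)
    then have "y = x + nmul (m - n) d"
      by simp
    then show thesis
      by (rule that(1))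
  next
    case False
    then have "y + nmul (n - m) d + nmul m d = x + nmul m d"
      by (simp add: mn add.assoc flip: nmul_add)
    then have "x = y + nmul (n - m) d"
      by simp
    then show thesis
      by (rule that(2))
  qed
qed

lemma add_mem_line:
  assumes "x' \<in> line d x" "y' \<in> line d y"
  shows "x' + y' \<in> line d (x + y)"
proof -
  obtain m n where mn: "x + nmul m d = x' + nmul n d"
    using assms(1) by (auto simp: line_def)
  obtain m' n' where mn': "y + nmul m' d = y' + nmul n' d"
    using assms(2) by (auto simp: line_def)
  have "(x + y) + nmul (m + m') d = (x + nmul m d) + (y + nmul m' d)"
    by (simp add: nmul_add add_ac)
  also have "\<dots> = (x' + y') + nmul (n + n') d"
    by (simp add: mn mn' nmul_add add_ac)
  finally show ?thesis
    unfolding line_def by blast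
qed

lemma add_right_mem_line_iff: "y + b \<in> line d (x + b) \<longleftrightarrow> y \<in> line d x"
proof -
  have "x + b + nmul m d = y + b + nmul n d \<longleftrightarrow> x + nmul m d = y + nmul n d" for m n
    using add_right_cancel [of "x + nmul m d" b "y + nmul n d"] by (simp add: add_ac)
  then show ?thesis
    unfolding line_def by simp
qed

lemma line_add_right_eq_iff: "line d (x + b) = line d (x' + b) \<longleftrightarrow> line d x = line d x'"
  by (simp add: line_eq_iff add_right_mem_line_iff)

lemma line_uminus: "line (- d) x = line d x"
proof -
  have "x + nmul m (- d) = y + nmul n (- d) \<longleftrightarrow> x + nmul n d = y + nmul m d" for y m n
    by (simp add: nmul_uminus algebra_simps flip: diff_conv_add_uminus)
  then show ?thesis
    unfolding line_def by simp blast
qed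

lemma image_add_right_line: "(\<lambda>z. z + b) ` line d x = line d (x + b)"
proof (rule set_eqI)
  fix z
  have "z \<in> line d (x + b) \<longleftrightarrow> z - b \<in> line d x"
    using add_right_mem_line_iff [of "z - b" b d x] by simp
  then show "z \<in> (\<lambda>z. z + b) ` line d x \<longleftrightarrow> z \<in> line d (x + b)"
    by (auto simp: add_right_mem_line_iff intro: image_eqI [of z _ "z - b"])
qed

lemma finite_subset_line_has_top:
  assumes "d \<notin> torsion" "finite X" "X \<noteq> {}" "X \<subseteq> line d x"
  obtains z where "z \<in> X" "\<And>y. y \<in> X \<Longrightarrow> \<exists>n. z = y + nmul n d"
proof -
  obtain x0 where x0: "x0 \<in> X"
    using assms(3) by blast
  have X_line: "X \<subseteq> line d x0"
    using assms(4) x0 line_eq by blast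
  define S where "S = (\<lambda>n. x0 + nmul n d) -` X"
  have "inj (\<lambda>n. x0 + nmul n d)"
    using nmul_inj_notin_torsion [OF assms(1)] by (auto intro: injI)
  then have "finite S"
    unfolding S_def using assms(2) by (rule finite_vimageI [rotated])
  moreover have "0 \<in> S"
    using x0 by (simp add: S_def)
  ultimately have top: "Max S \<in> S" "\<And>n. n \<in> S \<Longrightarrow> n \<le> Max S"
    by (auto intro: Max_in)
  have "\<exists>n. x0 + nmul (Max S) d = y + nmul n d" if "y \<in> X" for y
  proof -
    from X_line that have "y \<in> line d x0"
      by blast
    then show ?thesis
    proof (cases rule: mem_line_cases)
      case (1 n)
      with \<open>y \<in> X\<close> have "n \<le> Max S"
        by (intro top(2)) (simp add: S_def)
      then have "x0 + nmul (Max S) d = y + nmul (Max S - n) d"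
        by (simp add: 1 add.assoc flip: nmul_add)
      then show ?thesis ..
    next
      case (2 n)
      then have "x0 + nmul (Max S) d = y + nmul (n + Max S) d"
        by (simp add: nmul_add add.assoc)
      then show ?thesis ..
    qed
  qed
  moreover have "x0 + nmul (Max S) d \<in> X"
    using top(1) by (simp add: S_def)
  ultimately show thesis
    using that by blast
qed

lemma exists_last_in_line:
  assumes "d \<notin> torsion" "finite C" "c \<in> C"
  obtains z where "z \<in> C" "z \<in> line d c" "z + d \<notin> C"
proof -
  have "finite (C \<inter> line d c)" "C \<inter> line d c \<noteq> {}"
    using assms(2,3) by auto
  then obtain z where z: "z \<in> C \<inter> line d c" "\<And>y. y \<in> C \<inter> line d c \<Longrightarrow> \<exists>n. z = y + nmul n d"
    using finite_subset_line_has_top [OF assms(1) _ _ Int_lower2] by blast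
  have "z + d \<notin> C"
  proof
    assume "z + d \<in> C"
    moreover have "z + d \<in> line d c"
      using z(1) line_trans [OF _ add_nmul_mem_line [of z 1 d]] by (simp add: nmul_Suc add.commute)
    ultimately obtain n where "z = (z + d) + nmul n d"
      using z(2) by blast
    then have "nmul (Suc n) d = 0"
      by (simp add: nmul_Suc add.assoc)
    then show False
      using assms(1) by (simp add: nmul_eq_0_iff_notin_torsion)
  qed
  with z(1) show thesis
    using that by blast
qed

lemma card_sumset_subset_line:
  assumes "d \<notin> torsion" "finite X" "finite Y" "X \<noteq> {}" "Y \<noteq> {}"
    and "X \<subseteq> line d x" "Y \<subseteq> line d y"
  shows "card X + card Y \<le> card (sumset X Y) + 1"
proof -
  obtain xt where xt: "xt \<in> X" "\<And>x'. x' \<in> X \<Longrightarrow> \<exists>n. xt = x' + nmul n d"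
    using finite_subset_line_has_top [OF assms(1,2,4,6)] by blast
  have "Y \<subseteq> line (- d) y"
    using assms(7) by (simp add: line_uminus)
  then obtain yb where yb: "yb \<in> Y" "\<And>y'. y' \<in> Y \<Longrightarrow> \<exists>n. yb = y' + nmul n (- d)"
    using finite_subset_line_has_top [OF uminus_notin_torsion [OF assms(1)] assms(3,5)] by blast
  define P where "P = (\<lambda>x'. x' + yb) ` X"
  define Q where "Q = (\<lambda>y'. xt + y') ` Y"
  have "P \<union> Q \<subseteq> sumset X Y"
    using xt(1) yb(1) by (auto simp: P_def Q_def intro: add_mem_sumset)
  moreover have "P \<inter> Q \<subseteq> {xt + yb}"
  proof
    fix z assume "z \<in> P \<inter> Q"
    then obtain x' y' where x'y': "x' \<in> X" "y' \<in> Y" "z = x' + yb" "z = xt + y'"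
      by (auto simp: P_def Q_def)
    obtain p where p: "xt = x' + nmul p d"
      using xt(2) [OF \<open>x' \<in> X\<close>] ..
    obtain q where "yb = y' + nmul q (- d)"
      using yb(2) [OF \<open>y' \<in> Y\<close>] ..
    then have q: "y' = yb + nmul q d"
      by (simp add: nmul_uminus)
    have "z + nmul (p + q) d = (x' + nmul p d) + (yb + nmul q d)"
      using x'y'(3) by (simp add: nmul_add add_ac)
    also have "\<dots> = z"
      using x'y'(4) by (simp add: p q)
    finally have "p = 0"
      using nmul_eq_0_iff_notin_torsion [OF assms(1)] by simp
    then show "z \<in> {xt + yb}"
      using p x'y'(3) by simp
  qed
  then have "card (P \<inter> Q) \<le> 1"
    using card_mono [of "{xt + yb}"] by simp
  moreover have "card P = card X" "card Q = card Y"
    by (simp_all add: P_def Q_def card_image)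
  moreover have "card P + card Q = card (P \<union> Q) + card (P \<inter> Q)"
    using assms(2,3) by (intro card_Un_Int) (simp_all add: P_def Q_def)
  moreover have "card (P \<union> Q) \<le> card (sumset X Y)"
    using assms(2,3) \<open>P \<union> Q \<subseteq> sumset X Y\<close> by (intro card_mono) simp_all
  ultimately show ?thesis
    by linarith
qed

lemma sumset_Int_lines_subset_line: "sumset (A \<inter> line d x) (B \<inter> line d y) \<subseteq> line d (x + y)"
  by (auto simp: sumset_iff intro: add_mem_line line_sym)

lemma card_eq_sum_card_Int_lines:
  assumes "finite B"
  shows "card B = (\<Sum>K\<in>line d ` B. card (B \<inter> K))"
proof -
  have "B = (\<Union>K\<in>line d ` B. B \<inter> K)"
    by auto
  also have "card \<dots> = (\<Sum>K\<in>line d ` B. card (B \<inter> K))"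
    using assms lines_disjoint by (intro card_UN_disjoint) blast+
  finally show ?thesis .
qed

lemma exists_popular_line:
  assumes "finite B" "B \<noteq> {}"
  obtains y where "y \<in> B" "card B \<le> card (line d ` B) * card (B \<inter> line d y)"
proof -
  define m where "m = Max ((\<lambda>y. card (B \<inter> line d y)) ` B)"
  have "m \<in> (\<lambda>y. card (B \<inter> line d y)) ` B"
    unfolding m_def using assms by (intro Max_in) simp_all
  then obtain y where y: "y \<in> B" "card (B \<inter> line d y) = m"
    by auto
  have "card B = (\<Sum>K\<in>line d ` B. card (B \<inter> K))"
    using assms(1) by (rule card_eq_sum_card_Int_lines)
  also have "\<dots> \<le> card (line d ` B) * m"
    using assms(1) by (intro sum_bounded_above [where 'a = nat, simplified]) (auto simp: m_def)
  finally show ?thesis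
    using that y by simp
qed

lemma card_sumset_ge_by_lines:
  assumes "d \<notin> torsion" "finite A" "finite B" "y \<in> B"
  shows "card A + card (line d ` A) * card (B \<inter> line d y)
    \<le> card (sumset A B) + card (line d ` A)"
proof -
  define By where "By = B \<inter> line d y"
  define F where "F K = sumset (A \<inter> K) By" for K
  have F_disjoint: "F K \<inter> F K' = {}" if "K \<in> line d ` A" "K' \<in> line d ` A" "K \<noteq> K'" for K K'
  proof -
    from that obtain x x' where "K = line d x" "K' = line d x'" "line d (x + y) \<noteq> line d (x' + y)"
      by (auto simp: line_add_right_eq_iff)
    then show ?thesis
      using sumset_Int_lines_subset_line [of A d x B y] sumset_Int_lines_subset_line [of A d x' B y]
        lines_disjoint by (fastforce simp: F_def By_def)
  qed
  have F_card: "card (A \<inter> K) + card By \<le> card (F K) + 1" if "K \<in> line d ` A" for K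
  proof -
    from that obtain x where "x \<in> A" "K = line d x"
      by blast
    then show ?thesis
      unfolding F_def using assms
      by (intro card_sumset_subset_line [of d _ _ x y]) (auto simp: By_def)
  qed
  have "card A + card (line d ` A) * card By = (\<Sum>K\<in>line d ` A. card (A \<inter> K) + card By)"
    by (simp add: sum.distrib card_eq_sum_card_Int_lines [OF assms(2), of d])
  also have "\<dots> \<le> (\<Sum>K\<in>line d ` A. card (F K) + 1)"
    by (intro sum_mono F_card)
  also have "\<dots> = (\<Sum>K\<in>line d ` A. card (F K)) + card (line d ` A)"
    by (simp only: sum.distrib) simp
  also have "\<dots> = card (\<Union>K\<in>line d ` A. F K) + card (line d ` A)"
    using assms(2,3) F_disjoint by (subst card_UN_disjoint) (auto simp: F_def By_def)
  also have "\<dots> \<le> card (sumset A B) + card (line d ` A)"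
    unfolding F_def By_def using assms(2,3)
    by (intro add_right_mono card_mono UN_least sumset_mono) auto
  finally show ?thesis
    by (simp add: By_def)
qed

lemma card_sumset_ge_popular_line:
  assumes "d \<notin> torsion" "finite A" "finite B" "B \<noteq> {}"
  obtains t where "card B \<le> card (line d ` B) * t"
    and "card A + card (line d ` A) * t \<le> card (sumset A B) + card (line d ` A)"
  using exists_popular_line [OF assms(3,4)] card_sumset_ge_by_lines [OF assms(1-3)] by metis

lemma card_lines_le_card_lines_sumset:
  assumes "finite A" "finite B" "b \<in> B"
  shows "card (line d ` A) \<le> card (line d ` sumset A B)"
proof (rule card_inj_on_le)
  show "inj_on (image (\<lambda>z. z + b)) (line d ` A)"
    by (rule inj_on_image) (simp add: inj_on_def)
  show "image (\<lambda>z. z + b) ` line d ` A \<subseteq> line d ` sumset A B"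
    using assms(3) by (auto simp: image_add_right_line intro!: imageI add_mem_sumset)
  show "finite (line d ` sumset A B)"
    using assms(1,2) by simp
qed

lemma card_add_card_lines_le_card_sumset_pair:
  assumes "d \<notin> torsion" "finite C"
  shows "card C + card (line d ` C) \<le> card (sumset C {u, u + d})"
proof -
  define T where "T = {c \<in> C. c + d \<notin> C}"
  have "line d ` C \<subseteq> line d ` T"
  proof
    fix K
    assume "K \<in> line d ` C"
    then obtain c where "c \<in> C" "K = line d c"
      by blast
    moreover obtain z where "z \<in> C" "z \<in> line d c" "z + d \<notin> C"
      using exists_last_in_line [OF assms \<open>c \<in> C\<close>] .
    ultimately have "z \<in> T" "K = line d z"
      using line_eq by (auto simp: T_def)
    then show "K \<in> line d ` T"
      by blast
  qed
  then have "card (line d ` C) \<le> card (line d ` T)"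
    using assms(2) by (intro card_mono) (simp_all add: T_def)
  also have "\<dots> \<le> card T"
    using assms(2) by (intro card_image_le) (simp add: T_def)
  finally have "card (line d ` C) \<le> card T" .
  moreover have "card C + card T \<le> card (sumset C {u, u + d})"
  proof -
    define P where "P = (\<lambda>c. c + u) ` C"
    define Q where "Q = (\<lambda>c. c + (u + d)) ` T"
    have "P \<inter> Q = {}"
      by (auto simp: P_def Q_def T_def add.assoc [symmetric])
    moreover have "P \<union> Q \<subseteq> sumset C {u, u + d}"
      by (auto simp: P_def Q_def T_def intro: add_mem_sumset)
    moreover have "card P = card C" "card Q = card T"
      by (simp_all add: P_def Q_def card_image)
    ultimately show ?thesis
      using assms(2) card_mono [of "sumset C {u, u + d}" "P \<union> Q"]
      by (simp add: card_Un_disjoint P_def Q_def T_def)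
  qed
  ultimately show ?thesis
    by linarith
qed

lemma two_le_card_Int_line:
  assumes "d \<notin> torsion" "finite B" "u \<in> B" "u + d \<in> B"
  shows "2 \<le> card (B \<inter> line d u)"
proof -
  have "d \<noteq> 0"
    using assms(1) nmul_eq_0_iff_notin_torsion [of d 1] by (simp add: nmul_Suc)
  then have "card {u, u + d} = 2"
    by simp
  moreover have "{u, u + d} \<subseteq> B \<inter> line d u"
    using assms(3,4) add_nmul_mem_line [of u 1 d] by (simp add: nmul_Suc add.commute)
  ultimately show ?thesis
    using assms(2) card_mono [of "B \<inter> line d u" "{u, u + d}"] by simp
qed

(* AM-GM bounds both a + b and p (b / q) + q (a / p) from below by 2 sqrt (a b). *)
lemma sqrt_mult_le_of_cross_bounds:
  fixes a b c p q s t X :: real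
  assumes "0 < p" "0 < q" "0 \<le> a" "0 \<le> b" "0 \<le> c"
    and "a \<le> p * s" "b \<le> q * t"
    and "a + c * p * t \<le> X" "b + c * q * s \<le> X"
  shows "(1 + c) * sqrt (a * b) \<le> X"
proof -
  have "p * (b / q) \<le> p * t" "q * (a / p) \<le> q * s"
    using assms by (simp_all add: pos_divide_le_eq mult.commute)
  moreover have "sqrt (a * b) \<le> (p * (b / q) + q * (a / p)) / 2"
    using arith_geo_mean_sqrt [of "p * (b / q)" "q * (a / p)"] assms(1-4) by (simp add: field_simps)
  ultimately have "sqrt (a * b) \<le> (p * t + q * s) / 2"
    by (meson add_mono divide_right_mono order_trans zero_le_numeral)
  then have "c * sqrt (a * b) \<le> c * ((p * t + q * s) / 2)"
    using assms(5) by (rule mult_left_mono)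
  moreover have "sqrt (a * b) \<le> (a + b) / 2"
    using arith_geo_mean_sqrt assms(3,4) by blast
  ultimately show ?thesis
    using assms(8,9) by (simp add: algebra_simps)
qed

lemma two_sqrt_card_le_card_sumset_sumset:
  assumes "d \<notin> torsion" "finite A" "finite B" "finite U" "A \<noteq> {}" "B \<noteq> {}"
    and "u \<in> U" "u + d \<in> U"
  shows "2 * sqrt (real (card A) * real (card B)) \<le> real (card (sumset (sumset A B) U))"
proof -
  define C where "C = sumset A B"
  define N where "N = card (sumset C U)"
  have "card C + card (line d ` C) \<le> card (sumset C {u, u + d})"
    using assms(1-3) by (intro card_add_card_lines_le_card_sumset_pair) (simp_all add: C_def)
  also have "\<dots> \<le> N"
    unfolding N_def C_def using assms(2-4,7,8) by (intro card_mono sumset_mono) auto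
  finally have C_bound: "card C + card (line d ` C) \<le> N" .
  obtain t where t: "card B \<le> card (line d ` B) * t"
    "card A + card (line d ` A) * t \<le> card C + card (line d ` A)"
    using card_sumset_ge_popular_line [OF assms(1-3,6)] unfolding C_def by blast
  obtain s where s: "card A \<le> card (line d ` A) * s"
    "card B + card (line d ` B) * s \<le> card C + card (line d ` B)"
    using card_sumset_ge_popular_line [OF assms(1,3,2,5)] unfolding C_def sumset_commute [of B] by blast
  have "card (line d ` A) \<le> card (line d ` C)" "card (line d ` B) \<le> card (line d ` C)"
    using assms(2,3,5,6) card_lines_le_card_lines_sumset [of A B] card_lines_le_card_lines_sumset [of B A]
    by (auto simp: C_def sumset_commute [of B])
  with t s C_bound have "card A + card (line d ` A) * t \<le> N" "card B + card (line d ` B) * s \<le> N"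
    by linarith+
  moreover have "0 < card (line d ` A)" "0 < card (line d ` B)"
    using assms(2,3,5,6) by (simp_all add: card_gt_0_iff)
  ultimately show ?thesis
    using sqrt_mult_le_of_cross_bounds [of "card (line d ` A)" "card (line d ` B)" "card A" "card B" 1
        s t N] t(1) s(1)
    by (simp add: N_def C_def flip: of_nat_mult of_nat_add)
qed

lemma three_halves_sqrt_card_le_card_sumset:
  assumes "d \<notin> torsion" "finite A" "finite B" "{u, u + d} \<subseteq> A" "{u, u + d} \<subseteq> B"
  shows "3 / 2 * sqrt (real (card A) * real (card B)) \<le> real (card (sumset A B))"
proof -
  define N where "N = card (sumset A B)"
  have "A \<noteq> {}" "B \<noteq> {}"
    using assms(4,5) by auto
  obtain t where t: "card B \<le> card (line d ` B) * t"
    "card A + card (line d ` A) * t \<le> N + card (line d ` A)"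
    using card_sumset_ge_popular_line [OF assms(1-3) \<open>B \<noteq> {}\<close>] unfolding N_def by blast
  obtain s where s: "card A \<le> card (line d ` A) * s"
    "card B + card (line d ` B) * s \<le> N + card (line d ` B)"
    using card_sumset_ge_popular_line [OF assms(1,3,2) \<open>A \<noteq> {}\<close>]
    unfolding N_def sumset_commute [of B] by blast
  have "card A + card (line d ` A) * card (B \<inter> line d u) \<le> N + card (line d ` A)"
    using assms by (simp add: N_def card_sumset_ge_by_lines)
  moreover have "card B + card (line d ` B) * card (A \<inter> line d u) \<le> N + card (line d ` B)"
    using assms card_sumset_ge_by_lines [of d B A u] by (simp add: N_def sumset_commute [of B])
  moreover have "2 \<le> card (B \<inter> line d u)" "2 \<le> card (A \<inter> line d u)"
    using assms by (simp_all add: two_le_card_Int_line)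
  ultimately have "card A + card (line d ` A) * 2 \<le> N + card (line d ` A)"
    "card B + card (line d ` B) * 2 \<le> N + card (line d ` B)"
    by (meson add_left_mono mult_le_mono2 order_trans)+
  with t s have "2 * card A + card (line d ` A) * t \<le> 2 * N" "2 * card B + card (line d ` B) * s \<le> 2 * N"
    by linarith+
  then have "real (card A) + 1 / 2 * real (card (line d ` A)) * real t \<le> real N"
    "real (card B) + 1 / 2 * real (card (line d ` B)) * real s \<le> real N"
    by (simp_all add: field_simps flip: of_nat_mult of_nat_add)
  moreover have "0 < card (line d ` A)" "0 < card (line d ` B)"
    using assms(2,3) \<open>A \<noteq> {}\<close> \<open>B \<noteq> {}\<close> by (simp_all add: card_gt_0_iff)
  ultimately show ?thesis
    using sqrt_mult_le_of_cross_bounds [of "card (line d ` A)" "card (line d ` B)" "card A" "card B" "1 / 2"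
        s t N] t(1) s(1)
    by (simp add: N_def flip: of_nat_mult)
qed

lemma two_le_beta:
  assumes "d \<notin> torsion" "finite U" "u \<in> U" "u + d \<in> U"
  shows "2 \<le> beta U"
  unfolding beta_def
proof (rule cInf_greatest)
  fix r
  assume "r \<in> {real (card (sumset (sumset A B) U)) / sqrt (real (card A) * real (card B)) | A B.
    finite A \<and> A \<noteq> {} \<and> finite B \<and> B \<noteq> {}}"
  then obtain A B where "finite A" "A \<noteq> {}" "finite B" "B \<noteq> {}"
    and r: "r = real (card (sumset (sumset A B) U)) / sqrt (real (card A) * real (card B))"
    by blast
  then show "2 \<le> r"
    using two_sqrt_card_le_card_sumset_sumset [of d A B U u] assms
    by (simp add: pos_le_divide_eq card_gt_0_iff)
qed (use assms(2,3) in auto)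

lemma three_halves_le_alpha:
  assumes "d \<notin> torsion" "finite U" "u \<in> U" "u + d \<in> U"
  shows "3 / 2 \<le> alpha U"
  unfolding alpha_def
proof (rule cInf_greatest)
  fix r
  assume "r \<in> {real (card (sumset A B)) / sqrt (real (card A) * real (card B)) | A B.
    finite A \<and> A \<noteq> {} \<and> finite B \<and> B \<noteq> {} \<and> U \<subseteq> A \<and> U \<subseteq> B}"
  then obtain A B where "finite A" "A \<noteq> {}" "finite B" "B \<noteq> {}" "U \<subseteq> A" "U \<subseteq> B"
    and r: "r = real (card (sumset A B)) / sqrt (real (card A) * real (card B))"
    by blast
  moreover have "{u, u + d} \<subseteq> A" "{u, u + d} \<subseteq> B"
    using \<open>U \<subseteq> A\<close> \<open>U \<subseteq> B\<close> assms(3,4) by auto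
  ultimately show "3 / 2 \<le> r"
    using three_halves_sqrt_card_le_card_sumset [of d A B u] assms(1)
    by (simp add: pos_le_divide_eq card_gt_0_iff)
qed (use assms(2,3) in auto)

lemma finite_torsion_subset_in_finite_submonoid:
  assumes "finite V" "V \<subseteq> torsion"
  shows "\<exists>K. finite K \<and> 0 \<in> K \<and> V \<subseteq> K \<and> (\<forall>x\<in>K. \<forall>y\<in>K. x + y \<in> K)"
  using assms
proof (induction V rule: finite_induct)
  case empty
  show ?case
    by (rule exI [of _ "{0}"]) simp
next
  case (insert v V)
  then obtain K where K: "finite K" "0 \<in> K" "V \<subseteq> K" "\<forall>x\<in>K. \<forall>y\<in>K. x + y \<in> K"
    by auto
  obtain n where n: "n > 0" "nmul n v = 0"
    using insert.prems by (auto simp: torsion_def)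
  define K' where "K' = (\<lambda>(i, k). nmul i v + k) ` ({..<n} \<times> K)"
  have mem_K': "nmul i v + k \<in> K'" if "k \<in> K" for i k
    using that n nmul_mod [OF n(2), of i]
    unfolding K'_def by (intro rev_image_eqI [of "(i mod n, k)"]) auto
  have "v \<in> K'" "0 \<in> K'"
    using mem_K' [of 0 1] mem_K' [of 0 0] K(2) by (simp_all add: nmul_Suc)
  moreover have "V \<subseteq> K'"
    using mem_K' [of _ 0] K(3) by auto
  moreover have "x + y \<in> K'" if "x \<in> K'" "y \<in> K'" for x y
  proof -
    from that obtain i k j l where "k \<in> K" "l \<in> K" "x = nmul i v + k" "y = nmul j v + l"
      by (auto simp: K'_def)
    then show ?thesis
      using mem_K' [of "k + l" "i + j"] K(4) by (simp add: nmul_add add_ac)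
  qed
  moreover have "finite K'"
    using K(1) by (simp add: K'_def)
  ultimately show ?case
    by blast
qed

lemma sumset_sumset_subset_coset:
  assumes "\<forall>x\<in>K. \<forall>y\<in>K. x + y \<in> K" "U \<subseteq> (\<lambda>k. g + k) ` K"
  shows "sumset (sumset ((\<lambda>k. g + k) ` K) ((\<lambda>k. g + k) ` K)) U \<subseteq> (\<lambda>k. g + g + g + k) ` K"
proof
  fix z
  assume "z \<in> sumset (sumset ((\<lambda>k. g + k) ` K) ((\<lambda>k. g + k) ` K)) U"
  then obtain k l u where "k \<in> K" "l \<in> K" "u \<in> U" and z: "z = (g + k) + (g + l) + u"
    by (auto simp: sumset_iff)
  moreover from \<open>u \<in> U\<close> obtain m where "m \<in> K" "u = g + m"
    using assms(2) by blast
  ultimately have "k + l + m \<in> K" "z = g + g + g + (k + l + m)"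
    using assms(1) by (auto simp: algebra_simps)
  then show "z \<in> (\<lambda>k. g + g + g + k) ` K"
    by blast
qed

lemma in_single_torsion_coset_nongrowing_superset:
  assumes "finite U" "U \<noteq> {}" "in_single_torsion_coset U"
  obtains A where "finite A" "U \<subseteq> A" "card (sumset A A) = card A"
    and "card (sumset (sumset A A) U) = card A"
proof -
  obtain g where g: "\<forall>u\<in>U. u - g \<in> torsion"
    using assms(3) by (auto simp: in_single_torsion_coset_def)
  then have "(\<lambda>u. u - g) ` U \<subseteq> torsion"
    by blast
  then obtain K where K: "finite K" "0 \<in> K" "(\<lambda>u. u - g) ` U \<subseteq> K" "\<forall>x\<in>K. \<forall>y\<in>K. x + y \<in> K"
    using finite_torsion_subset_in_finite_submonoid [of "(\<lambda>u. u - g) ` U"] assms(1) by blast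
  define A where "A = (\<lambda>k. g + k) ` K"
  have "finite A" "card A = card K"
    using K(1) by (simp_all add: A_def card_image)
  have "U \<subseteq> A"
  proof
    fix u
    assume "u \<in> U"
    then have "u - g \<in> K"
      using K(3) by blast
    then show "u \<in> A"
      unfolding A_def by (rule image_eqI [rotated]) simp
  qed
  then have "sumset (sumset A A) U \<subseteq> (\<lambda>k. g + g + g + k) ` K"
    unfolding A_def by (rule sumset_sumset_subset_coset [OF K(4)])
  then have "card (sumset (sumset A A) U) \<le> card ((\<lambda>k. g + g + g + k) ` K)"
    using K(1) by (intro card_mono) simp_all
  also have "\<dots> = card A"
    by (simp add: card_image \<open>card A = card K\<close>)
  finally have "card (sumset (sumset A A) U) \<le> card A" .
  moreover obtain u where "u \<in> U"
    using assms(2) by blast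
  then have "card A \<le> card (sumset A A)" "card (sumset A A) \<le> card (sumset (sumset A A) U)"
    using \<open>finite A\<close> \<open>U \<subseteq> A\<close> assms(1) card_le_card_sumset [of A A u]
      card_le_card_sumset [of "sumset A A" U u] by auto
  ultimately have "card (sumset A A) = card A" "card (sumset (sumset A A) U) = card A"
    by linarith+
  with \<open>finite A\<close> \<open>U \<subseteq> A\<close> show ?thesis
    by (rule that)
qed

lemma alphas_eq_1:
  assumes "finite A" "U \<subseteq> A" "U \<noteq> {}" "card (sumset A A) = card A"
  shows "alpha U = 1" "alpha' U = 1" "alpha'' U = 1"
proof -
  have "0 < card A"
    using assms(1-3) by (auto simp: card_gt_0_iff)
  have le_ratio: "1 \<le> real (card (sumset A' B)) / real (card A')"
    if "finite A'" "finite B" "A' \<noteq> {}" "B \<noteq> {}" for A' B :: "'a set"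
    using that card_le_card_sumset [of A' B] by (auto simp: card_gt_0_iff)
  have le_ratio_sqrt: "1 \<le> real (card (sumset A' B)) / sqrt (real (card A') * real (card B))"
    if "finite A'" "finite B" "A' \<noteq> {}" "B \<noteq> {}" for A' B :: "'a set"
    using that sqrt_card_le_card_sumset [of A' B] by (simp add: card_gt_0_iff)
  show "alpha U = 1"
    unfolding alpha_def using assms \<open>0 < card A\<close>
    by (intro cInf_eq_minimum) (auto intro!: exI [of _ A] le_ratio_sqrt)
  show "alpha' U = 1" "alpha'' U = 1"
    unfolding alpha'_def alpha''_def using assms \<open>0 < card A\<close>
    by (intro cInf_eq_minimum; auto intro!: exI [of _ A] le_ratio)+
qed

lemma betas_eq_1:
  assumes "finite A" "A \<noteq> {}" "finite U" "U \<noteq> {}" "card (sumset (sumset A A) U) = card A"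
  shows "beta U = 1" "beta' U = 1" "beta'' U = 1"
proof -
  obtain u where "u \<in> U"
    using assms(4) by blast
  have U_bound: "card (sumset A' B) \<le> card (sumset (sumset A' B) U)"
    if "finite A'" "finite B" for A' B :: "'a set"
    using that assms(3) \<open>u \<in> U\<close> by (simp add: card_le_card_sumset)
  have le_ratio: "1 \<le> real (card (sumset (sumset A' A') U)) / real (card A')"
    if "finite A'" "A' \<noteq> {}" for A' :: "'a set"
    using that U_bound [of A' A'] card_le_card_sumset [of A' A'] by (auto simp: card_gt_0_iff)
  have le_ratio_sqrt: "1 \<le> real (card (sumset (sumset A' B) U)) / sqrt (real (card A') * real (card B))"
    if "finite A'" "finite B" "A' \<noteq> {}" "B \<noteq> {}" for A' B :: "'a set"
    using that U_bound [of A' B] sqrt_card_le_card_sumset [of A' B] by (simp add: card_gt_0_iff)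
  show "beta U = 1" "beta' U = 1"
    unfolding beta_def beta'_def using assms
    by (intro cInf_eq_minimum; auto simp: card_gt_0_iff intro!: exI [of _ A] le_ratio_sqrt)+
  show "beta'' U = 1"
    unfolding beta''_def using assms
    by (intro cInf_eq_minimum) (auto simp: card_gt_0_iff intro!: exI [of _ A] le_ratio)
qed

theorem mainTheorem19:
  fixes U :: "'a::ab_group_add set"
  assumes "finite U" and "U \<noteq> {}"
  shows "(in_single_torsion_coset U \<longrightarrow>
            alpha U = 1 \<and> alpha' U = 1 \<and> alpha'' U = 1 \<and>
            beta U = 1 \<and> beta' U = 1 \<and> beta'' U = 1)
       \<and> (\<not> in_single_torsion_coset U \<longrightarrow> beta U \<ge> 2 \<and> alpha U \<ge> 3/2)"
proof (rule conjI; intro impI)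
  assume "in_single_torsion_coset U"
  then obtain A where "finite A" "U \<subseteq> A" "card (sumset A A) = card A"
    and "card (sumset (sumset A A) U) = card A"
    using in_single_torsion_coset_nongrowing_superset assms by blast
  moreover have "A \<noteq> {}"
    using \<open>U \<subseteq> A\<close> assms(2) by blast
  ultimately show "alpha U = 1 \<and> alpha' U = 1 \<and> alpha'' U = 1 \<and> beta U = 1 \<and> beta' U = 1 \<and> beta'' U = 1"
    using alphas_eq_1 [of A U] betas_eq_1 [of A U] assms by simp
next
  assume "\<not> in_single_torsion_coset U"
  moreover obtain u where "u \<in> U"
    using assms(2) by blast
  ultimately obtain v where "v \<in> U" "v - u \<notin> torsion"
    by (auto simp: in_single_torsion_coset_def)
  with \<open>u \<in> U\<close> show "2 \<le> beta U \<and> 3 / 2 \<le> alpha U"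
    using two_le_beta [of "v - u" U u] three_halves_le_alpha [of "v - u" U u] assms(1) by simp
qed

end
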